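(* Let $N\ge2$ and $\alpha\in\mathbb{C}^N$. If $L_N$ is globally hypoelliptic, then $\mathcal{M}_N=\mathcal{M}_{N,\infty}\cap(\mathbb{Z}+\alpha_1\mathbb{Z}+\cdots+\alpha_N\mathbb{Z})^c$. If $L_N$ is not globally hypoelliptic, then $\mathcal{M}_N=\mathcal{M}_{N,\infty}$. In either case $\mathcal{M}_N$ is a $\mathcal{G}_\delta$ subset of $\mathbb{C}$.
   Context: $\mathbb{T}^n=\mathbb{R}^n/2\pi\mathbb{Z}^n$; $D_t=-i\partial_t$, $D_{x_j}=-i\partial_{x_j}$. A linear differential operator $P$ on $\mathbb{T}^n$ is globally hypoelliptic (GH) if $u\in\mathcal{D}'(\mathbb{T}^n)$ and $Pu\in\mathcal{C}^\infty(\mathbb{T}^n)$ imply $u\in\mathcal{C}^\infty(\mathbb{T}^n)$. For $\alpha\in\mathbb{C}^N$, $L_N=D_t+\sum_{j=1}^N\alpha_jD_{x_j}$ on $\mathbb{T}^{N+1}$, $P_{N,\lambda}=L_N-\lambda$, and $\mathcal{M}_N=\{\lambda\in\mathbb{C}: P_{N,\lambda}\text{ is not GH}\}$. For $(\tau,\xi)\in\mathbb{Z}\times\mathbb{Z}^N$ write $|(\tau,\xi)|=|\tau|+|\xi_1|+\cdots+|\xi_N|$ and $\rho_\lambda(\tau,\xi)=\tau+\alpha_1\xi_1+\cdots+\alpha_N\xi_N-\lambda$. For $j\in\mathbb{N}$ let $\mathcal{M}_N(j)=\bigcup_{(\tau,\xi)\in\mathbb{Z}\times\mathbb{Z}^N,\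 |(\tau,\xi)|>1}\{\lambda\in\mathbb{C}: |\rho_\lambda(\tau,\xi)|<|(\tau,\xi)|^{-j}\}$, and $\mathcal{M}_{N,\infty}=\bigcap_{j\in\mathbb{N}}\mathcal{M}_N(j)$. *)

theory Defs
  imports "HOL-Analysis.Analysis"
begin

text \<open>Frequencies of the torus T^n = R^n / 2 pi Z^n: integer vectors k, represented as
  functions nat => int vanishing at indices >= n.  For T^(N+1) with variables (t, x_1..x_N),
  index 0 is the dual variable tau of t and index j (1 <= j <= N) is xi_j.\<close>

definition freqs :: "nat \<Rightarrow> (nat \<Rightarrow> int) set" where
  "freqs n = {k. \<forall>i\<ge>n. k i = 0}"

definition freq_norm :: "nat \<Rightarrow> (nat \<Rightarrow> int) \<Rightarrow> int" where
  "freq_norm n k = (\<Sum>i<n. \<bar>k i\<bar>)"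

text \<open>Distributions on T^n, identified with their Fourier coefficient sequences
  (sequences of at most polynomial growth).\<close>
definition is_distribution :: "nat \<Rightarrow> ((nat \<Rightarrow> int) \<Rightarrow> complex) \<Rightarrow> bool" where
  "is_distribution n u \<longleftrightarrow>
     (\<exists>C m. \<forall>k\<in>freqs n. norm (u k) \<le> C * (1 + real_of_int (freq_norm n k)) ^ m)"

text \<open>Smooth functions on T^n, identified with their Fourier coefficient sequences
  (rapidly decreasing sequences).\<close>
definition is_smooth :: "nat \<Rightarrow> ((nat \<Rightarrow> int) \<Rightarrow> complex) \<Rightarrow> bool" where
  "is_smooth n u \<longleftrightarrow>
     (\<forall>m::nat. \<exists>C. \<forall>k\<in>freqs n. norm (u k) * (1 + real_of_int (freq_norm n k)) ^ m \<le> C)"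

text \<open>A constant-coefficient operator P on T^n with symbol p acts on Fourier
  coefficients by (P u)^(k) = p(k) u^(k).  Global hypoellipticity of P:\<close>
definition globally_hypoelliptic :: "nat \<Rightarrow> ((nat \<Rightarrow> int) \<Rightarrow> complex) \<Rightarrow> bool" where
  "globally_hypoelliptic n p \<longleftrightarrow>
     (\<forall>u. is_distribution n u \<and> is_smooth n (\<lambda>k. p k * u k) \<longrightarrow> is_smooth n u)"

text \<open>rho_lambda(tau, xi) = tau + alpha_1 xi_1 + ... + alpha_N xi_N - lambda, the symbol of
  P_{N,lambda} = D_t + sum_j alpha_j D_{x_j} - lambda (with k 0 = tau, k j = xi_j).\<close>
definition rho :: "nat \<Rightarrow> (nat \<Rightarrow> complex) \<Rightarrow> complex \<Rightarrow> (nat \<Rightarrow> int) \<Rightarrow> complex" where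
  "rho N \<alpha> lam k = of_int (k 0) + (\<Sum>j\<in>{1..N}. \<alpha> j * of_int (k j)) - lam"

definition M_set :: "nat \<Rightarrow> (nat \<Rightarrow> complex) \<Rightarrow> complex set" where
  "M_set N \<alpha> = {lam. \<not> globally_hypoelliptic (Suc N) (rho N \<alpha> lam)}"

definition M_j :: "nat \<Rightarrow> (nat \<Rightarrow> complex) \<Rightarrow> nat \<Rightarrow> complex set" where
  "M_j N \<alpha> j = (\<Union>k\<in>{k\<in>freqs (Suc N). freq_norm (Suc N) k > 1}.
      {lam. norm (rho N \<alpha> lam k) < 1 / real_of_int (freq_norm (Suc N) k) ^ j})"

definition M_infty :: "nat \<Rightarrow> (nat \<Rightarrow> complex) \<Rightarrow> complex set" where
  "M_infty N \<alpha> = (\<Inter>j\<in>{1..}. M_j N \<alpha> j)"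

definition lattice_set :: "nat \<Rightarrow> (nat \<Rightarrow> complex) \<Rightarrow> complex set" where
  "lattice_set N \<alpha> = (\<lambda>k. rho N \<alpha> 0 k) ` freqs (Suc N)"

end

theory Submission
  imports Defs
begin

(* By the Greenfield-Wallach criterion, the operator with symbol p is globally hypoelliptic
  iff, for some M, |p(k)| >= |k|^(-M) for all large |k|.  Hence lambda lies in M_N iff
  rho_lambda becomes smaller than every power of |k|^(-1) along frequencies tending to
  infinity.  This puts M_N inside M_{N,infty}; conversely, at a point of M_{N,infty} where
  rho_lambda has no zero, i.e. off the lattice Z + alpha_1 Z + ... + alpha_N Z, the small
  values demanded by M_N(j) can only occur at frequencies tending to infinity, so the point
  lies in M_N.  Translating frequencies by k0 replaces lambda by lambda - rho_0(k0), so a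
  lattice point lies in M_N exactly when 0 does, i.e. when L_N is not globally hypoelliptic.
  Finally M_{N,infty} is a countable intersection of open sets and the lattice is countable. *)

abbreviation freq_weight :: "nat \<Rightarrow> (nat \<Rightarrow> int) \<Rightarrow> real" where
  "freq_weight n k \<equiv> 1 + real_of_int (freq_norm n k)"

lemma freq_norm_nonneg [simp]: "0 \<le> freq_norm n k"
  unfolding freq_norm_def by (simp add: sum_nonneg)

lemma freq_norm_add_le: "freq_norm n (\<lambda>i. a i + b i) \<le> freq_norm n a + freq_norm n b"
  unfolding freq_norm_def sum.distrib[symmetric] by (rule sum_mono) simp

lemma freq_norm_le_add: "freq_norm n a \<le> freq_norm n (\<lambda>i. a i + b i) + freq_norm n b"
  unfolding freq_norm_def sum.distrib[symmetric] by (rule sum_mono) simp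

lemma freqs_add: "a \<in> freqs n \<Longrightarrow> b \<in> freqs n \<Longrightarrow> (\<lambda>i. a i + b i) \<in> freqs n"
  and freqs_uminus: "a \<in> freqs n \<Longrightarrow> (\<lambda>i. - a i) \<in> freqs n"
  unfolding freqs_def by auto

lemma freqs_subset_extend_PiE:
  assumes "K \<subseteq> freqs n" and "\<And>k i. k \<in> K \<Longrightarrow> i < n \<Longrightarrow> k i \<in> A"
  shows "K \<subseteq> (\<lambda>f i. if i < n then f i else 0) ` (\<Pi>\<^sub>E i\<in>{..<n}. A)"
proof
  fix k assume k: "k \<in> K"
  then have "\<forall>i\<ge>n. k i = 0"
    using assms(1) unfolding freqs_def by blast
  then have "k = (\<lambda>i. if i < n then restrict k {..<n} i else 0)"
    by (simp add: fun_eq_iff)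
  moreover have "restrict k {..<n} \<in> (\<Pi>\<^sub>E i\<in>{..<n}. A)"
    using assms(2) k by auto
  ultimately show "k \<in> (\<lambda>f i. if i < n then f i else 0) ` (\<Pi>\<^sub>E i\<in>{..<n}. A)"
    by blast
qed

lemma finite_freqs_freq_norm_le: "finite {k \<in> freqs n. freq_norm n k \<le> R}"
proof (rule finite_subset[OF freqs_subset_extend_PiE])
  fix k i assume k: "k \<in> {k \<in> freqs n. freq_norm n k \<le> R}" and "i < n"
  have "\<bar>k i\<bar> \<le> freq_norm n k"
    unfolding freq_norm_def by (rule member_le_sum) (use \<open>i < n\<close> in auto)
  then show "k i \<in> {-R..R}"
    using k by (simp add: abs_le_iff)
qed (auto intro!: finite_imageI finite_PiE)

lemma countable_freqs: "countable (freqs n)"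
  by (rule countable_subset[OF freqs_subset_extend_PiE[where A = UNIV]])
     (auto intro: countable_PiE)

lemma one_plus_power_le_power_double:
  fixes x y :: real
  assumes "0 \<le> y" and "y \<le> 2 * x"
  shows "(1 + y) ^ M \<le> (1 + x) ^ (2 * M)"
proof -
  have "1 + y \<le> (1 + x) ^ 2"
    using assms by (simp add: power2_eq_square algebra_simps add_increasing)
  then have "(1 + y) ^ M \<le> ((1 + x) ^ 2) ^ M"
    by (rule power_mono) (use assms in auto)
  then show ?thesis by (simp add: power_mult)
qed

lemma is_smooth_if_bounded_outside_ball:
  assumes "\<And>m. \<exists>C R. \<forall>k\<in>freqs n.
             R \<le> freq_norm n k \<longrightarrow> norm (u k) * freq_weight n k ^ m \<le> C"
  shows "is_smooth n u"
  unfolding is_smooth_def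
proof
  fix m
  obtain C R where C: "\<forall>k\<in>freqs n. R \<le> freq_norm n k \<longrightarrow> norm (u k) * freq_weight n k ^ m \<le> C"
    using assms by blast
  let ?ball = "{k \<in> freqs n. freq_norm n k \<le> R}"
  have "bdd_above ((\<lambda>k. norm (u k) * freq_weight n k ^ m) ` ?ball)"
    by (intro bdd_above_finite finite_imageI finite_freqs_freq_norm_le)
  then obtain C' where C': "\<forall>k\<in>?ball. norm (u k) * freq_weight n k ^ m \<le> C'"
    by (auto simp: bdd_above_def)
  have "norm (u k) * freq_weight n k ^ m \<le> max C C'" if "k \<in> freqs n" for k
  proof (cases "R \<le> freq_norm n k")
    case True
    with C that have "norm (u k) * freq_weight n k ^ m \<le> C" by blast
    then show ?thesis by linarith
  next
    case False
    with C' that have "norm (u k) * freq_weight n k ^ m \<le> C'" by simp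
    then show ?thesis by linarith
  qed
  then show "\<exists>C. \<forall>k\<in>freqs n. norm (u k) * freq_weight n k ^ m \<le> C" by blast
qed

definition polynomially_bounded_below :: "nat \<Rightarrow> ((nat \<Rightarrow> int) \<Rightarrow> complex) \<Rightarrow> bool" where
  "polynomially_bounded_below n p \<longleftrightarrow>
     (\<exists>M::nat. \<exists>R::int. \<forall>k\<in>freqs n. R \<le> freq_norm n k \<longrightarrow> 1 \<le> norm (p k) * freq_weight n k ^ M)"

lemma not_polynomially_bounded_below_iff:
  "\<not> polynomially_bounded_below n p \<longleftrightarrow>
     (\<forall>M::nat. \<forall>R::int. \<exists>k\<in>freqs n. R \<le> freq_norm n k \<and> norm (p k) * freq_weight n k ^ M < 1)"
  unfolding polynomially_bounded_below_def by (auto simp: not_le)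

lemma globally_hypoelliptic_if_polynomially_bounded_below:
  assumes "polynomially_bounded_below n p"
  shows "globally_hypoelliptic n p"
  unfolding globally_hypoelliptic_def
proof (intro allI impI)
  fix u assume "is_distribution n u \<and> is_smooth n (\<lambda>k. p k * u k)"
  then have pu: "\<exists>C. \<forall>k\<in>freqs n. norm (p k * u k) * freq_weight n k ^ m \<le> C" for m
    unfolding is_smooth_def by blast
  obtain M R where MR: "\<forall>k\<in>freqs n. R \<le> freq_norm n k \<longrightarrow> 1 \<le> norm (p k) * freq_weight n k ^ M"
    using assms unfolding polynomially_bounded_below_def by blast
  show "is_smooth n u"
  proof (rule is_smooth_if_bounded_outside_ball)
    fix m
    obtain C where C: "\<forall>k\<in>freqs n. norm (p k * u k) * freq_weight n k ^ (m + M) \<le> C"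
      using pu by blast
    have "norm (u k) * freq_weight n k ^ m \<le> C" if "k \<in> freqs n" "R \<le> freq_norm n k" for k
    proof -
      have "1 \<le> norm (p k) * freq_weight n k ^ M"
        using MR that by blast
      then have "norm (u k) * freq_weight n k ^ m * 1
          \<le> norm (u k) * freq_weight n k ^ m * (norm (p k) * freq_weight n k ^ M)"
        by (rule mult_left_mono) simp
      also have "\<dots> = norm (p k * u k) * freq_weight n k ^ (m + M)"
        by (simp add: norm_mult power_add)
      also have "\<dots> \<le> C"
        using C that(1) by blast
      finally show ?thesis by simp
    qed
    then show "\<exists>C R. \<forall>k\<in>freqs n. R \<le> freq_norm n k \<longrightarrow> norm (u k) * freq_weight n k ^ m \<le> C"
      by blast
  qed
qed

lemma is_smooth_supported_on_sequence:
  assumes "\<And>i. norm (v (ks i)) * freq_weight n (ks i) ^ i \<le> 1"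
  shows "is_smooth n (\<lambda>k. if k \<in> range ks then v k else 0)"
  unfolding is_smooth_def
proof
  fix m
  let ?g = "\<lambda>i. norm (v (ks i)) * freq_weight n (ks i) ^ m"
  have "norm (if k \<in> range ks then v k else 0) * freq_weight n k ^ m \<le> 1 + (\<Sum>i<m. ?g i)" for k
  proof (cases "k \<in> range ks")
    case False
    then show ?thesis by (simp add: sum_nonneg)
  next
    case True
    then obtain i where k: "k = ks i" by blast
    show ?thesis
    proof (cases "i < m")
      case True
      have "?g i \<le> (\<Sum>i<m. ?g i)"
        by (rule member_le_sum) (use True in auto)
      then show ?thesis using k by simp
    next
      case False
      have "?g i \<le> norm (v (ks i)) * freq_weight n (ks i) ^ i"
        by (intro mult_left_mono power_increasing) (use False in auto)
      also have "\<dots> \<le> 1" by (rule assms)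
      finally have "?g i \<le> 1" .
      moreover have "0 \<le> (\<Sum>i<m. ?g i)" by (simp add: sum_nonneg)
      ultimately show ?thesis using k by simp
    qed
  qed
  then show "\<exists>C. \<forall>k\<in>freqs n. norm (if k \<in> range ks then v k else 0) * freq_weight n k ^ m \<le> C"
    by blast
qed

lemma not_globally_hypoelliptic_if_not_polynomially_bounded_below:
  assumes "\<not> polynomially_bounded_below n p"
  shows "\<not> globally_hypoelliptic n p"
proof -
  have "\<forall>i. \<exists>k. k \<in> freqs n \<and> int i \<le> freq_norm n k \<and> norm (p k) * freq_weight n k ^ i < 1"
  proof
    fix i :: nat
    show "\<exists>k. k \<in> freqs n \<and> int i \<le> freq_norm n k \<and> norm (p k) * freq_weight n k ^ i < 1"
      using assms[unfolded not_polynomially_bounded_below_iff, rule_format, where M = i and R = "int i"]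
      by blast
  qed
  from choice[OF this] obtain ks where ks: "\<And>i. ks i \<in> freqs n" "\<And>i. int i \<le> freq_norm n (ks i)"
      "\<And>i. norm (p (ks i)) * freq_weight n (ks i) ^ i < 1"
    by blast
  \<comment> \<open>The indicator of the frequencies ks i is bounded but does not decay,
    while p times it decays faster than any power.\<close>
  define u where "u = (\<lambda>k. if k \<in> range ks then 1 else 0 :: complex)"
  have "is_distribution n u"
    unfolding is_distribution_def by (intro exI[of _ 1] exI[of _ 0]) (simp add: u_def)
  moreover have "is_smooth n (\<lambda>k. p k * u k)"
  proof -
    have "is_smooth n (\<lambda>k. if k \<in> range ks then p k else 0)"
      by (rule is_smooth_supported_on_sequence) (rule less_imp_le[OF ks(3)])
    moreover have "(\<lambda>k. p k * u k) = (\<lambda>k. if k \<in> range ks then p k else 0)"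
      by (simp add: u_def fun_eq_iff)
    ultimately show ?thesis by simp
  qed
  moreover have "\<not> is_smooth n u"
  proof
    assume "is_smooth n u"
    then obtain C where C: "\<forall>k\<in>freqs n. norm (u k) * freq_weight n k ^ 1 \<le> C"
      unfolding is_smooth_def by blast
    define i where "i = nat \<lceil>C\<rceil>"
    have "C < 1 + real i" unfolding i_def by linarith
    also have "\<dots> \<le> freq_weight n (ks i)"
      using ks(2)[of i] by (metis add_left_mono of_int_le_iff of_int_of_nat_eq)
    also have "\<dots> = norm (u (ks i)) * freq_weight n (ks i) ^ 1"
      by (simp add: u_def)
    finally show False using C ks(1) by (simp add: not_le[symmetric])
  qed
  ultimately show ?thesis
    unfolding globally_hypoelliptic_def by blast
qed

lemma globally_hypoelliptic_iff_polynomially_bounded_below: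
  "globally_hypoelliptic n p \<longleftrightarrow> polynomially_bounded_below n p"
  using globally_hypoelliptic_if_polynomially_bounded_below
    not_globally_hypoelliptic_if_not_polynomially_bounded_below by blast

lemma polynomially_bounded_below_shift:
  assumes "polynomially_bounded_below n p" and "k0 \<in> freqs n"
  shows "polynomially_bounded_below n (\<lambda>k. p (\<lambda>i. k i + k0 i))"
proof -
  obtain M R where MR: "\<forall>k\<in>freqs n. R \<le> freq_norm n k \<longrightarrow> 1 \<le> norm (p k) * freq_weight n k ^ M"
    using assms(1) unfolding polynomially_bounded_below_def by blast
  have "1 \<le> norm (p (\<lambda>i. k i + k0 i)) * freq_weight n k ^ (2 * M)"
    if k: "k \<in> freqs n" "\<bar>R\<bar> + freq_norm n k0 \<le> freq_norm n k" for k
  proof -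
    let ?d = "\<lambda>i. k i + k0 i"
    have "freq_norm n k \<le> freq_norm n ?d + freq_norm n k0"
      by (rule freq_norm_le_add)
    with k MR assms(2) have "1 \<le> norm (p ?d) * freq_weight n ?d ^ M"
      by (simp add: freqs_add)
    also have "\<dots> \<le> norm (p ?d) * freq_weight n k ^ (2 * M)"
      using freq_norm_add_le[of n k k0] k(2) freq_norm_nonneg[of n k0]
      by (intro mult_left_mono one_plus_power_le_power_double) auto
    finally show ?thesis .
  qed
  then show ?thesis
    unfolding polynomially_bounded_below_def
    by (intro exI[of _ "2 * M"] exI[of _ "\<bar>R\<bar> + freq_norm n k0"]) auto
qed

lemma globally_hypoelliptic_shift_iff:
  assumes "k0 \<in> freqs n"
  shows "globally_hypoelliptic n (\<lambda>k. p (\<lambda>i. k i + k0 i)) \<longleftrightarrow> globally_hypoelliptic n p"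
proof
  assume "globally_hypoelliptic n (\<lambda>k. p (\<lambda>i. k i + k0 i))"
  then have "polynomially_bounded_below n (\<lambda>k. p (\<lambda>i. (k i + - k0 i) + k0 i))"
    by (intro polynomially_bounded_below_shift[where p = "\<lambda>k. p (\<lambda>i. k i + k0 i)"]
        freqs_uminus assms) (simp add: globally_hypoelliptic_iff_polynomially_bounded_below)
  then show "globally_hypoelliptic n p"
    by (simp add: globally_hypoelliptic_iff_polynomially_bounded_below)
qed (simp add: globally_hypoelliptic_iff_polynomially_bounded_below
      polynomially_bounded_below_shift assms)

lemma small_values_if_not_polynomially_bounded_below:
  assumes "\<not> polynomially_bounded_below n p"
  shows "\<exists>k\<in>freqs n. 1 < freq_norm n k \<and> norm (p k) < 1 / real_of_int (freq_norm n k) ^ j"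
proof -
  obtain k where k: "k \<in> freqs n" "2 \<le> freq_norm n k" "norm (p k) * freq_weight n k ^ j < 1"
    using assms unfolding not_polynomially_bounded_below_iff by blast
  have "norm (p k) * real_of_int (freq_norm n k) ^ j \<le> norm (p k) * freq_weight n k ^ j"
    using k(2) by (intro mult_left_mono power_mono) auto
  with k have "norm (p k) < 1 / real_of_int (freq_norm n k) ^ j"
    by (simp add: field_simps)
  moreover have "1 < freq_norm n k" using k(2) by simp
  ultimately show ?thesis using k(1) by blast
qed

lemma not_polynomially_bounded_below_if_small_values:
  assumes nonzero: "\<forall>k\<in>freqs n. p k \<noteq> 0"
    and small: "\<forall>j\<ge>1. \<exists>k\<in>freqs n.
                  1 < freq_norm n k \<and> norm (p k) < 1 / real_of_int (freq_norm n k) ^ j"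
  shows "\<not> polynomially_bounded_below n p"
  unfolding not_polynomially_bounded_below_iff
proof (intro allI)
  fix M :: nat and R :: int
  let ?ball = "{k \<in> freqs n. freq_norm n k \<le> R}"
  define d where "d = Min (insert 1 ((\<lambda>k. norm (p k)) ` ?ball))"
  have "finite ?ball" by (rule finite_freqs_freq_norm_le)
  then have d: "0 < d" "\<forall>k\<in>?ball. d \<le> norm (p k)"
    using nonzero unfolding d_def by auto
  obtain j where j: "(1 / 2) ^ j < d"
    using real_arch_pow_inv[OF d(1), of "1 / 2"] by auto
  \<comment> \<open>The exponent J beats both the threshold d, which keeps the frequency outside the
    ball, and the weight (1 + |k|)^M \<le> |k|^(2M).\<close>
  define J where "J = j + 2 * M + 1"
  have "1 \<le> J" unfolding J_def by simp
  then obtain k where k: "k \<in> freqs n" "1 < freq_norm n k"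
      "norm (p k) < 1 / real_of_int (freq_norm n k) ^ J"
    using small by blast
  define x where "x = real_of_int (freq_norm n k)"
  have x: "2 \<le> x" using k(2) unfolding x_def by simp
  have "1 / x ^ J \<le> (1 / 2) ^ j"
  proof -
    have "1 / x ^ J \<le> (1 / 2) ^ J"
      using x by (simp add: power_one_over divide_le_eq_1 power_mono frac_le)
    also have "\<dots> \<le> (1 / 2) ^ j" unfolding J_def by (intro power_decreasing) auto
    finally show ?thesis .
  qed
  with k(3) j have "norm (p k) < d" unfolding x_def by linarith
  with d(2) k(1) have "\<not> freq_norm n k \<le> R" by force
  then have "R \<le> freq_norm n k" by simp
  moreover have "norm (p k) * freq_weight n k ^ M < 1"
  proof -
    have "2 * x \<le> x * x" using x by (intro mult_right_mono) auto
    then have "1 + x \<le> x ^ 2" using x unfolding power2_eq_square by linarith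
    then have "(1 + x) ^ M \<le> (x ^ 2) ^ M" by (rule power_mono) (use x in auto)
    also have "\<dots> = x ^ (2 * M)" by (simp add: power_mult)
    also have "\<dots> \<le> x ^ J" unfolding J_def by (rule power_increasing) (use x in auto)
    finally have "(1 + x) ^ M \<le> x ^ J" .
    then have "norm (p k) * (1 + x) ^ M \<le> norm (p k) * x ^ J"
      by (rule mult_left_mono) simp
    also have "\<dots> < 1" using k(3) x unfolding x_def by (simp add: field_simps)
    finally show ?thesis unfolding x_def .
  qed
  ultimately show "\<exists>k\<in>freqs n. R \<le> freq_norm n k \<and> norm (p k) * freq_weight n k ^ M < 1"
    using k(1) by blast
qed

lemma norm_rho_eq_dist: "norm (rho N \<alpha> lam k) = dist (rho N \<alpha> 0 k) lam"
  unfolding rho_def dist_norm by simp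

lemma rho_shift: "rho N \<alpha> lam (\<lambda>i. k i + k0 i) = rho N \<alpha> (lam - rho N \<alpha> 0 k0) k"
  unfolding rho_def by (simp add: sum.distrib algebra_simps)

lemma lattice_point_in_M_set_iff:
  assumes "\<mu> \<in> lattice_set N \<alpha>"
  shows "\<mu> \<in> M_set N \<alpha> \<longleftrightarrow> \<not> globally_hypoelliptic (Suc N) (rho N \<alpha> 0)"
proof -
  obtain k0 where k0: "k0 \<in> freqs (Suc N)" and \<mu>: "\<mu> = rho N \<alpha> 0 k0"
    using assms unfolding lattice_set_def by blast
  have "(\<lambda>k. rho N \<alpha> \<mu> (\<lambda>i. k i + k0 i)) = rho N \<alpha> 0"
    by (simp add: rho_shift \<mu> fun_eq_iff)
  then show ?thesis
    unfolding M_set_def using globally_hypoelliptic_shift_iff[OF k0, of "rho N \<alpha> \<mu>"] by simp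
qed

lemma mem_M_j_iff:
  "lam \<in> M_j N \<alpha> j \<longleftrightarrow> (\<exists>k\<in>freqs (Suc N). 1 < freq_norm (Suc N) k \<and>
     norm (rho N \<alpha> lam k) < 1 / real_of_int (freq_norm (Suc N) k) ^ j)"
  unfolding M_j_def by blast

lemma M_set_subset_M_infty: "M_set N \<alpha> \<subseteq> M_infty N \<alpha>"
proof
  fix lam assume "lam \<in> M_set N \<alpha>"
  then have "\<not> polynomially_bounded_below (Suc N) (rho N \<alpha> lam)"
    unfolding M_set_def globally_hypoelliptic_iff_polynomially_bounded_below by simp
  then have "lam \<in> M_j N \<alpha> j" for j
    unfolding mem_M_j_iff by (rule small_values_if_not_polynomially_bounded_below)
  then show "lam \<in> M_infty N \<alpha>"
    unfolding M_infty_def by blast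
qed

lemma M_infty_minus_lattice_subset_M_set: "M_infty N \<alpha> - lattice_set N \<alpha> \<subseteq> M_set N \<alpha>"
proof
  fix lam assume lam: "lam \<in> M_infty N \<alpha> - lattice_set N \<alpha>"
  have "\<forall>k\<in>freqs (Suc N). rho N \<alpha> lam k \<noteq> 0"
  proof
    fix k assume "k \<in> freqs (Suc N)"
    then have "rho N \<alpha> 0 k \<noteq> lam"
      using lam unfolding lattice_set_def by blast
    then show "rho N \<alpha> lam k \<noteq> 0"
      by (metis norm_rho_eq_dist dist_eq_0_iff norm_zero)
  qed
  moreover have "\<forall>j\<ge>1. lam \<in> M_j N \<alpha> j"
    using lam unfolding M_infty_def by auto
  ultimately have "\<not> polynomially_bounded_below (Suc N) (rho N \<alpha> lam)"
    unfolding mem_M_j_iff by (rule not_polynomially_bounded_below_if_small_values)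
  then show "lam \<in> M_set N \<alpha>"
    unfolding M_set_def globally_hypoelliptic_iff_polynomially_bounded_below by simp
qed

lemma open_M_j: "open (M_j N \<alpha> j)"
proof -
  have ball: "{lam. norm (rho N \<alpha> lam k) < r} = ball (rho N \<alpha> 0 k) r" for k r
    unfolding ball_def norm_rho_eq_dist ..
  show ?thesis
    unfolding M_j_def ball by (intro open_UN ballI open_ball)
qed

lemma gdelta_M_infty: "gdelta_in euclidean (M_infty N \<alpha>)"
  unfolding M_infty_def
proof (rule gdelta_in_Inter)
  show "countable (M_j N \<alpha> ` {1..})" by (rule countable_image) simp
  show "M_j N \<alpha> ` {1..} \<noteq> {}" by simp
  show "gdelta_in euclidean S" if "S \<in> M_j N \<alpha> ` {1..}" for S
  proof -
    from that obtain j where "S = M_j N \<alpha> j" by blast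
    then show ?thesis
      using open_M_j open_imp_gdelta_in open_openin by metis
  qed
qed

lemma fsigma_in_countable:
  fixes S :: "'a::t1_space set"
  assumes "countable S"
  shows "fsigma_in euclidean S"
proof -
  have "fsigma_in euclidean (\<Union>x\<in>S. {x})"
    using assms by (intro fsigma_in_Union closed_imp_fsigma_in) (auto simp flip: closed_closedin)
  then show ?thesis by simp
qed

lemma countable_lattice_set: "countable (lattice_set N \<alpha>)"
  unfolding lattice_set_def by (intro countable_image countable_freqs)

theorem proposition2p2:
  fixes N :: nat and \<alpha> :: "nat \<Rightarrow> complex"
  assumes "N \<ge> 2"
  shows "(globally_hypoelliptic (Suc N) (rho N \<alpha> 0) \<longrightarrow>
            M_set N \<alpha> = M_infty N \<alpha> \<inter> (- lattice_set N \<alpha>))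
       \<and> (\<not> globally_hypoelliptic (Suc N) (rho N \<alpha> 0) \<longrightarrow> M_set N \<alpha> = M_infty N \<alpha>)
       \<and> gdelta_in euclidean (M_set N \<alpha>)"
proof -
  let ?GH = "globally_hypoelliptic (Suc N) (rho N \<alpha> 0)"
  note lower = M_infty_minus_lattice_subset_M_set[of N \<alpha>]
    and upper = M_set_subset_M_infty[of N \<alpha>]
  have GH: "M_set N \<alpha> = M_infty N \<alpha> - lattice_set N \<alpha>" if ?GH
  proof -
    have "\<mu> \<notin> M_set N \<alpha>" if "\<mu> \<in> lattice_set N \<alpha>" for \<mu>
      using lattice_point_in_M_set_iff[OF that] \<open>?GH\<close> by simp
    with lower upper show ?thesis by blast
  qed
  have not_GH: "M_set N \<alpha> = M_infty N \<alpha>" if "\<not> ?GH"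
  proof -
    have "\<mu> \<in> M_set N \<alpha>" if "\<mu> \<in> lattice_set N \<alpha>" for \<mu>
      using lattice_point_in_M_set_iff[OF that] \<open>\<not> ?GH\<close> by simp
    with lower upper show ?thesis by blast
  qed
  have "gdelta_in euclidean (M_infty N \<alpha> - lattice_set N \<alpha>)"
    by (intro gdelta_in_diff gdelta_M_infty fsigma_in_countable countable_lattice_set)
  then have "gdelta_in euclidean (M_set N \<alpha>)"
    using GH not_GH gdelta_M_infty by (cases ?GH) simp_all
  with GH not_GH show ?thesis by (simp add: Diff_eq)
qed

end
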